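(* Let $v_1,\dots,v_m$ be distinct values and $X_1,\dots,X_n$ finite domain variables. Introduce variables $Y_1,\dots,Y_{n+1}$ with domains in $\{0,\dots,m\}$, $Y_1=0$, and for each $1\le i\le n$ the ternary constraint $D(X_i,Y_i,Y_{i+1})$ which holds iff $X_i\neq v_j$ for every $j>Y_i+1$, and $Y_{i+1}=Y_i+1$ if $X_i=v_{Y_i+1}$, and $Y_{i+1}=Y_i$ otherwise. Then (a) an assignment to $X_1,\dots,X_n$ satisfies $\mathrm{Precedence}([v_1,\dots,v_m],[X_1,\dots,X_n])$ iff it extends to an assignment of $Y_1,\dots,Y_{n+1}$ with $Y_1=0$ satisfying all $D(X_i,Y_i,Y_{i+1})$; and (b) if $D(Y_1)=\{0\}$ and every constraint $D(X_i,Y_i,Y_{i+1})$, $1\le i\le n$, is GAC (with all domains nonempty), then $\mathrm{Precedence}([v_1,\dots,v_m],[X_1,\dots,X_n])$ is GAC on the domains of $X_1,\dots,X_n$.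
   Context: A support of a constraint is an assignment of a value from its domain to each of its variables that satisfies it; a constraint is GAC iff every value in every variable's domain belongs to some support. For distinct values $a,b$, $\mathrm{Precedence}([a,b],[X_1,\dots,X_n])$ holds iff $\min\{i \mid X_i=a \text{ or } i=n+1\} < \min\{i \mid X_i=b \text{ or } i=n+2\}$; $\mathrm{Precedence}([v_1,\dots,v_m],[X_1,\dots,X_n])$ holds iff $\mathrm{Precedence}([v_i,v_{i+1}],[X_1,\dots,X_n])$ holds for all $1\le i<m$. *)

theory Defs
  imports Main
begin

(* Values v 1, ..., v m (indexed from 1); an assignment to X_1..X_n is a function x :: nat => 'a,
   of which only x 1, ..., x n matter. *)

definition prec_pair :: "'a \<Rightarrow> 'a \<Rightarrow> (nat \<Rightarrow> 'a) \<Rightarrow> nat \<Rightarrow> bool" where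
  "prec_pair a b x n \<longleftrightarrow>
     (LEAST i::nat. (1 \<le> i \<and> i \<le> n \<and> x i = a) \<or> i = n + 1)
   < (LEAST i::nat. (1 \<le> i \<and> i \<le> n \<and> x i = b) \<or> i = n + 2)"

definition precedence :: "(nat \<Rightarrow> 'a) \<Rightarrow> nat \<Rightarrow> (nat \<Rightarrow> 'a) \<Rightarrow> nat \<Rightarrow> bool" where
  "precedence v m x n \<longleftrightarrow> (\<forall>i. 1 \<le> i \<and> i < m \<longrightarrow> prec_pair (v i) (v (Suc i)) x n)"

(* The ternary constraint D(X_i, Y_i, Y_{i+1}); v_{y+1} is taken not to exist when y + 1 > m. *)
definition Dcon :: "(nat \<Rightarrow> 'a) \<Rightarrow> nat \<Rightarrow> 'a \<Rightarrow> nat \<Rightarrow> nat \<Rightarrow> bool" where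
  "Dcon v m a y y' \<longleftrightarrow>
     (\<forall>j. y + 1 < j \<and> j \<le> m \<longrightarrow> a \<noteq> v j) \<and>
     (if y + 1 \<le> m \<and> a = v (y + 1) then y' = y + 1 else y' = y)"

definition gac3 :: "('a \<Rightarrow> 'b \<Rightarrow> 'c \<Rightarrow> bool) \<Rightarrow> 'a set \<Rightarrow> 'b set \<Rightarrow> 'c set \<Rightarrow> bool" where
  "gac3 P A B C \<longleftrightarrow>
     (\<forall>a\<in>A. \<exists>b\<in>B. \<exists>c\<in>C. P a b c) \<and>
     (\<forall>b\<in>B. \<exists>a\<in>A. \<exists>c\<in>C. P a b c) \<and>
     (\<forall>c\<in>C. \<exists>a\<in>A. \<exists>b\<in>B. P a b c)"

definition gac :: "((nat \<Rightarrow> 'a) \<Rightarrow> bool) \<Rightarrow> nat \<Rightarrow> (nat \<Rightarrow> 'a set) \<Rightarrow> bool" where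
  "gac P n Dom \<longleftrightarrow>
     (\<forall>i\<in>{1..n}. \<forall>a\<in>Dom i. \<exists>x. (\<forall>k\<in>{1..n}. x k \<in> Dom k) \<and> x i = a \<and> P x)"

end

theory Submission
  imports Defs
begin

(* The constraint D(X i, Y i, Y (i+1)) is an automaton: Y i is a state c, meaning that
   v 1, ..., v c have been seen; the next value must not be one of v (c+2), ..., v m
   ("admissible"), and the state advances exactly when v (c+1) is read.  From Y 1 = 0 the states
   are therefore forced ("reached").  The invariant of the automaton shows that admissibility at
   position q is the same as the local precedence condition "an occurrence of v (i+1) at q is
   preceded by an occurrence of v i", and Precedence is the conjunction of these local conditions.

   The D constraints form a chain in which consecutive constraints share one variable.
   For any chain of GAC ternary constraints, a value of X i extends to a solution of the whole chain
   by taking a support of it, completing backwards and forwards through the supports.  Such a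
   solution starts in Y 1 = 0, so by part (a) it satisfies Precedence, which is therefore GAC. *)

definition admissible :: "(nat \<Rightarrow> 'a) \<Rightarrow> nat \<Rightarrow> 'a \<Rightarrow> nat \<Rightarrow> bool" where
  "admissible v m a c \<longleftrightarrow> (\<forall>j. c + 1 < j \<and> j \<le> m \<longrightarrow> a \<noteq> v j)"

definition advance :: "(nat \<Rightarrow> 'a) \<Rightarrow> nat \<Rightarrow> 'a \<Rightarrow> nat \<Rightarrow> nat" where
  "advance v m a c = (if c + 1 \<le> m \<and> a = v (c + 1) then c + 1 else c)"

lemma Dcon_iff: "Dcon v m a c c' \<longleftrightarrow> admissible v m a c \<and> c' = advance v m a c"
  unfolding Dcon_def admissible_def advance_def by auto

primrec reached :: "(nat \<Rightarrow> 'a) \<Rightarrow> nat \<Rightarrow> (nat \<Rightarrow> 'a) \<Rightarrow> nat \<Rightarrow> nat" where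
  "reached v m x 0 = 0"
| "reached v m x (Suc k) = advance v m (x (Suc k)) (reached v m x k)"

lemma reached_le: "reached v m x k \<le> m"
  by (induction k) (auto simp: advance_def)

lemma reached_seen:
  assumes inj: "inj_on v {1..m}"
    and adm: "\<forall>q\<in>{1..k}. admissible v m (x q) (reached v m x (q - 1))"
    and j: "j \<in> {1..m}"
  shows "(\<exists>q\<in>{1..k}. x q = v j) \<longleftrightarrow> j \<le> reached v m x k"
  using adm
proof (induction k)
  case 0
  then show ?case using j by simp
next
  case (Suc k)
  let ?r = "reached v m x k"
  have "\<forall>q\<in>{1..k}. admissible v m (x q) (reached v m x (q - 1))"
    using Suc.prems by auto
  then have IH: "(\<exists>q\<in>{1..k}. x q = v j) \<longleftrightarrow> j \<le> ?r"
    by (rule Suc.IH)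
  have "{1..Suc k} = insert (Suc k) {1..k}" by auto
  then have seen: "(\<exists>q\<in>{1..Suc k}. x q = v j) \<longleftrightarrow> j \<le> ?r \<or> x (Suc k) = v j"
    using IH by auto
  have adm_k: "admissible v m (x (Suc k)) ?r"
    using Suc.prems[rule_format, of "Suc k"] by simp
  show ?case
  proof (cases "?r + 1 \<le> m \<and> x (Suc k) = v (?r + 1)")
    case True
    have hit: "x (Suc k) = v j \<longleftrightarrow> j = ?r + 1"
    proof
      assume "x (Suc k) = v j"
      then have "v j = v (?r + 1)" using True by simp
      then show "j = ?r + 1" by (rule inj_onD[OF inj]) (use j True in auto)
    qed (use True in simp)
    have "reached v m x (Suc k) = ?r + 1"
      using True by (simp add: advance_def)
    then show ?thesis unfolding seen hit by arith
  next
    case False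
    have stay: "reached v m x (Suc k) = ?r"
      using False by (simp add: advance_def)
    have "j \<le> ?r" if e: "x (Suc k) = v j"
    proof -
      have "\<not> ?r + 1 < j" using adm_k e j unfolding admissible_def by auto
      moreover have "j \<noteq> ?r + 1" using False e j by auto
      ultimately show "j \<le> ?r" by linarith
    qed
    then show ?thesis unfolding seen stay by blast
  qed
qed

lemma prec_pair_iff:
  "prec_pair a b x n \<longleftrightarrow> (\<forall>p\<in>{1..n}. x p = b \<longrightarrow> (\<exists>k\<in>{1..<p}. x k = a))"
proof -
  define fa where "fa = (LEAST i::nat. (1 \<le> i \<and> i \<le> n \<and> x i = a) \<or> i = n + 1)"
  define fb where "fb = (LEAST i::nat. (1 \<le> i \<and> i \<le> n \<and> x i = b) \<or> i = n + 2)"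
  have fa: "(1 \<le> fa \<and> fa \<le> n \<and> x fa = a) \<or> fa = n + 1"
    unfolding fa_def by (rule LeastI[of _ "n + 1"]) simp
  have fa_min: "fa \<le> i" if "(1 \<le> i \<and> i \<le> n \<and> x i = a) \<or> i = n + 1" for i
    unfolding fa_def using that by (rule Least_le)
  have fb: "(1 \<le> fb \<and> fb \<le> n \<and> x fb = b) \<or> fb = n + 2"
    unfolding fb_def by (rule LeastI[of _ "n + 2"]) simp
  have fb_min: "fb \<le> i" if "(1 \<le> i \<and> i \<le> n \<and> x i = b) \<or> i = n + 2" for i
    unfolding fb_def using that by (rule Least_le)
  have "fa < fb \<longleftrightarrow> (\<forall>p\<in>{1..n}. x p = b \<longrightarrow> (\<exists>k\<in>{1..<p}. x k = a))"
  proof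
    assume lt: "fa < fb"
    show "\<forall>p\<in>{1..n}. x p = b \<longrightarrow> (\<exists>k\<in>{1..<p}. x k = a)"
    proof (intro ballI impI)
      fix p assume p: "p \<in> {1..n}" and "x p = b"
      then have "fa < p" using fb_min[of p] lt by auto
      then show "\<exists>k\<in>{1..<p}. x k = a" using fa p by auto
    qed
  next
    assume H: "\<forall>p\<in>{1..n}. x p = b \<longrightarrow> (\<exists>k\<in>{1..<p}. x k = a)"
    show "fa < fb"
    proof (cases "fb = n + 2")
      case True
      then show ?thesis using fa_min[of "n + 1"] by simp
    next
      case False
      then obtain k where "k \<in> {1..<fb}" "x k = a" using fb H by auto
      then show ?thesis using fa_min[of k] fb False by auto
    qed
  qed
  then show ?thesis unfolding prec_pair_def fa_def fb_def .
qed

definition preceded :: "(nat \<Rightarrow> 'a) \<Rightarrow> nat \<Rightarrow> (nat \<Rightarrow> 'a) \<Rightarrow> nat \<Rightarrow> bool" where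
  "preceded v m x q \<longleftrightarrow>
     (\<forall>i. 1 \<le> i \<and> i < m \<longrightarrow> x q = v (Suc i) \<longrightarrow> (\<exists>k\<in>{1..<q}. x k = v i))"

lemma precedence_iff_preceded:
  "precedence v m x n \<longleftrightarrow> (\<forall>q\<in>{1..n}. preceded v m x q)"
  unfolding precedence_def preceded_def prec_pair_iff by blast

lemma admissible_iff_shifted:
  "admissible v m a c \<longleftrightarrow> (\<forall>i. 1 \<le> i \<and> i < m \<longrightarrow> a = v (Suc i) \<longrightarrow> i \<le> c)"
  unfolding admissible_def
proof (intro iffI allI impI)
  fix i assume R: "\<forall>j. c + 1 < j \<and> j \<le> m \<longrightarrow> a \<noteq> v j"
    and i: "1 \<le> i \<and> i < m" and "a = v (Suc i)"
  then have "\<not> (c + 1 < Suc i \<and> Suc i \<le> m)" by blast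
  then show "i \<le> c" using i by linarith
next
  fix j assume L: "\<forall>i. 1 \<le> i \<and> i < m \<longrightarrow> a = v (Suc i) \<longrightarrow> i \<le> c"
    and j: "c + 1 < j \<and> j \<le> m"
  then obtain i where i: "j = Suc i" by (cases j) auto
  show "a \<noteq> v j"
  proof
    assume "a = v j"
    then have "i \<le> c" using L i j by simp
    then show False using i j by simp
  qed
qed

(* Given an admissible prefix, admissibility at position q is exactly the local condition at q,
   since by the invariant v i has occurred before q iff i is at most the current state. *)
lemma admissible_iff_preceded:
  assumes inj: "inj_on v {1..m}" and q: "1 \<le> q"
    and adm: "\<forall>p\<in>{1..q - 1}. admissible v m (x p) (reached v m x (p - 1))"
  shows "admissible v m (x q) (reached v m x (q - 1)) \<longleftrightarrow> preceded v m x q"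
proof -
  let ?r = "reached v m x (q - 1)"
  have "{1..<q} = {1..q - 1}" using q by auto
  then have seen: "(\<exists>k\<in>{1..<q}. x k = v i) \<longleftrightarrow> i \<le> ?r" if "i \<in> {1..m}" for i
    using reached_seen[OF inj adm that] by simp
  have "preceded v m x q \<longleftrightarrow> (\<forall>i. 1 \<le> i \<and> i < m \<longrightarrow> x q = v (Suc i) \<longrightarrow> i \<le> ?r)"
    unfolding preceded_def using seen by auto
  also have "\<dots> \<longleftrightarrow> admissible v m (x q) ?r"
    by (rule admissible_iff_shifted[symmetric])
  finally show ?thesis ..
qed

lemma admissible_prefix_iff:
  assumes inj: "inj_on v {1..m}"
  shows "(\<forall>q\<in>{1..n}. admissible v m (x q) (reached v m x (q - 1))) \<longleftrightarrow>
         (\<forall>q\<in>{1..n}. preceded v m x q)"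
proof (induction n)
  case 0
  then show ?case by simp
next
  case (Suc n)
  have split: "(\<forall>q\<in>{1..Suc n}. P q) \<longleftrightarrow> (\<forall>q\<in>{1..n}. P q) \<and> P (Suc n)" for P
    by (auto simp add: atLeastAtMostSuc_conv)
  show ?case
    using admissible_iff_preceded[OF inj, of "Suc n" x] Suc.IH unfolding split by auto
qed

lemma Dcon_chain_reached:
  assumes y1: "y 1 = 0" and D: "\<forall>i\<in>{1..n}. Dcon v m (x i) (y i) (y (Suc i))"
  shows "k \<le> n \<Longrightarrow> y (Suc k) = reached v m x k"
proof (induction k)
  case 0
  then show ?case using y1 by simp
next
  case (Suc k)
  then show ?case using D[rule_format, of "Suc k"] by (simp add: Dcon_iff)
qed

lemma precedence_iff_Dcon_chain:
  assumes inj: "inj_on v {1..m}"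
  shows "precedence v m x n \<longleftrightarrow>
           (\<exists>y :: nat \<Rightarrow> nat. y 1 = 0 \<and> (\<forall>i\<in>{1..n+1}. y i \<in> {0..m}) \<and>
              (\<forall>i\<in>{1..n}. Dcon v m (x i) (y i) (y (Suc i))))"
proof -
  have adm: "precedence v m x n \<longleftrightarrow> (\<forall>q\<in>{1..n}. admissible v m (x q) (reached v m x (q - 1)))"
    using admissible_prefix_iff[OF inj] precedence_iff_preceded by blast
  show ?thesis
  proof
    assume "precedence v m x n"
    then have "Dcon v m (x i) (reached v m x (i - 1)) (reached v m x i)" if i: "i \<in> {1..n}" for i
    proof -
      have "admissible v m (x i) (reached v m x (i - 1))"
        using adm i \<open>precedence v m x n\<close> by blast
      moreover obtain k where "i = Suc k" using i by (cases i) auto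
      ultimately show ?thesis by (simp add: Dcon_iff)
    qed
    then show "\<exists>y. y 1 = 0 \<and> (\<forall>i\<in>{1..n+1}. y i \<in> {0..m}) \<and>
                   (\<forall>i\<in>{1..n}. Dcon v m (x i) (y i) (y (Suc i)))"
      by (intro exI[of _ "\<lambda>i. reached v m x (i - 1)"]) (simp add: reached_le)
  next
    assume "\<exists>y. y 1 = 0 \<and> (\<forall>i\<in>{1..n+1}. y i \<in> {0..m}) \<and>
                (\<forall>i\<in>{1..n}. Dcon v m (x i) (y i) (y (Suc i)))"
    then obtain y where y1: "y 1 = 0" and D: "\<forall>i\<in>{1..n}. Dcon v m (x i) (y i) (y (Suc i))"
      by blast
    have "admissible v m (x q) (reached v m x (q - 1))" if q: "q \<in> {1..n}" for q
    proof -
      obtain k where k: "q = Suc k" using q by (cases q) auto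
      then show ?thesis
        using D[rule_format, OF q] Dcon_chain_reached[OF y1 D, of k] q by (simp add: Dcon_iff)
    qed
    then show "precedence v m x n" using adm by blast
  qed
qed

definition chain_prefix ::
  "('x \<Rightarrow> 'y \<Rightarrow> 'y \<Rightarrow> bool) \<Rightarrow> (nat \<Rightarrow> 'x set) \<Rightarrow> (nat \<Rightarrow> 'y set) \<Rightarrow> nat \<Rightarrow>
   (nat \<Rightarrow> 'x) \<Rightarrow> (nat \<Rightarrow> 'y) \<Rightarrow> bool" where
  "chain_prefix P DX DY k x y \<longleftrightarrow>
     (\<forall>q\<in>{1..<k}. x q \<in> DX q \<and> P (x q) (y q) (y (Suc q))) \<and> (\<forall>q\<in>{1..k}. y q \<in> DY q)"

lemma chain_prefix_step:
  assumes "chain_prefix P DX DY k x y" and "a \<in> DX k" and "c \<in> DY (Suc k)" and "P a (y k) c"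
  shows "chain_prefix P DX DY (Suc k) (x(k := a)) (y(Suc k := c))"
  using assms unfolding chain_prefix_def by (auto simp: less_Suc_eq le_Suc_eq)

(* If every constraint of the chain is GAC, every value in the domain of Y j is the end of a
   partial solution, built backwards: a value of Y (j+1) has a support in constraint j. *)
lemma chain_prefix_back:
  assumes G: "\<forall>i\<in>{1..n}. gac3 P (DX i) (DY i) (DY (Suc i))"
    and j: "1 \<le> j" "j \<le> n + 1" and c: "c \<in> DY j"
  shows "\<exists>x y. y j = c \<and> chain_prefix P DX DY j x y"
  using j c
proof (induction j arbitrary: c rule: nat_induct_at_least)
  case base
  then have "chain_prefix P DX DY 1 x (\<lambda>_. c)" for x
    unfolding chain_prefix_def by simp
  then show ?case by (intro exI[of _ undefined] exI[of _ "\<lambda>_. c"]) simp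
next
  case (Suc j)
  then have "j \<in> {1..n}" by simp
  then have "gac3 P (DX j) (DY j) (DY (Suc j))" using G by blast
  then obtain a b where ab: "a \<in> DX j" "b \<in> DY j" "P a b c"
    using Suc.prems(2) unfolding gac3_def by blast
  obtain x y where "y j = b" and pre: "chain_prefix P DX DY j x y"
    using Suc.IH[OF _ ab(2)] \<open>j \<in> {1..n}\<close> by auto
  then have "chain_prefix P DX DY (Suc j) (x(j := a)) (y(Suc j := c))"
    using chain_prefix_step[OF pre ab(1) Suc.prems(2)] ab(3) by simp
  then show ?case by (meson fun_upd_same)
qed

lemma chain_prefix_extend:
  assumes G: "\<forall>i\<in>{1..n}. gac3 P (DX i) (DY i) (DY (Suc i))"
    and start: "chain_prefix P DX DY j x y" "1 \<le> j"
    and k: "j \<le> k" "k \<le> n + 1"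
  shows "\<exists>x' y'. chain_prefix P DX DY k x' y' \<and> (\<forall>q<j. x' q = x q)"
  using k
proof (induction k rule: dec_induct)
  case base
  then show ?case using start by blast
next
  case (step k)
  then obtain x' y' where pre: "chain_prefix P DX DY k x' y'" and agree: "\<forall>q<j. x' q = x q"
    by auto
  have "k \<in> {1..n}" using step start by simp
  then have "gac3 P (DX k) (DY k) (DY (Suc k))" using G by blast
  moreover have "y' k \<in> DY k" using pre step start unfolding chain_prefix_def by simp
  ultimately obtain a c where ac: "a \<in> DX k" "c \<in> DY (Suc k)" "P a (y' k) c"
    unfolding gac3_def by blast
  have "chain_prefix P DX DY (Suc k) (x'(k := a)) (y'(Suc k := c))"
    by (rule chain_prefix_step[OF pre ac])
  moreover have "\<forall>q<j. (x'(k := a)) q = x q" using agree step by simp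
  ultimately show ?case by blast
qed

lemma gac3_chain_support:
  assumes G: "\<forall>i\<in>{1..n}. gac3 P (DX i) (DY i) (DY (Suc i))"
    and i: "i \<in> {1..n}" and a: "a \<in> DX i"
  shows "\<exists>x y. x i = a \<and> chain_prefix P DX DY (n + 1) x y"
proof -
  have "gac3 P (DX i) (DY i) (DY (Suc i))" using G i by blast
  then obtain b c where bc: "b \<in> DY i" "c \<in> DY (Suc i)" "P a b c"
    using a unfolding gac3_def by blast
  obtain x y where "y i = b" and pre: "chain_prefix P DX DY i x y"
    using chain_prefix_back[OF G _ _ bc(1)] i by auto
  then have pre': "chain_prefix P DX DY (Suc i) (x(i := a)) (y(Suc i := c))"
    using chain_prefix_step[OF pre a bc(2)] bc(3) by simp
  have "\<exists>x' y'. chain_prefix P DX DY (n + 1) x' y' \<and> (\<forall>q<Suc i. x' q = (x(i := a)) q)"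
    by (rule chain_prefix_extend[OF G pre']) (use i in auto)
  then obtain x' y' where "chain_prefix P DX DY (n + 1) x' y'" and "\<forall>q<Suc i. x' q = (x(i := a)) q"
    by blast
  moreover from this(2) have "x' i = a" by simp
  ultimately show ?thesis by blast
qed

theorem mainTheorem8:
  fixes v :: "nat \<Rightarrow> 'a" and m n :: nat
  assumes distinct: "inj_on v {1..m}"
  shows "(\<forall>x :: nat \<Rightarrow> 'a. precedence v m x n \<longleftrightarrow>
            (\<exists>y :: nat \<Rightarrow> nat. y 1 = 0 \<and> (\<forall>i\<in>{1..n+1}. y i \<in> {0..m}) \<and>
               (\<forall>i\<in>{1..n}. Dcon v m (x i) (y i) (y (Suc i)))))
       \<and> (\<forall>(DX :: nat \<Rightarrow> 'a set) (DY :: nat \<Rightarrow> nat set).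
            (\<forall>i\<in>{1..n}. finite (DX i) \<and> DX i \<noteq> {}) \<longrightarrow>
            (\<forall>i\<in>{1..n+1}. DY i \<subseteq> {0..m} \<and> DY i \<noteq> {}) \<longrightarrow>
            DY 1 = {0} \<longrightarrow>
            (\<forall>i\<in>{1..n}. gac3 (Dcon v m) (DX i) (DY i) (DY (Suc i))) \<longrightarrow>
            gac (\<lambda>x. precedence v m x n) n DX)"
proof (intro conjI allI impI)
  fix x :: "nat \<Rightarrow> 'a"
  show "precedence v m x n \<longleftrightarrow>
          (\<exists>y. y 1 = 0 \<and> (\<forall>i\<in>{1..n+1}. y i \<in> {0..m}) \<and>
             (\<forall>i\<in>{1..n}. Dcon v m (x i) (y i) (y (Suc i))))"
    by (rule precedence_iff_Dcon_chain[OF distinct])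
next
  fix DX :: "nat \<Rightarrow> 'a set" and DY :: "nat \<Rightarrow> nat set"
  assume range: "\<forall>i\<in>{1..n+1}. DY i \<subseteq> {0..m} \<and> DY i \<noteq> {}"
    and start: "DY 1 = {0}"
    and G: "\<forall>i\<in>{1..n}. gac3 (Dcon v m) (DX i) (DY i) (DY (Suc i))"
  show "gac (\<lambda>x. precedence v m x n) n DX" unfolding gac_def
  proof (intro ballI)
    fix i a assume "i \<in> {1..n}" and "a \<in> DX i"
    then obtain x y where "x i = a" and sol: "chain_prefix (Dcon v m) DX DY (n + 1) x y"
      using gac3_chain_support[OF G] by blast
    then have X: "\<forall>q\<in>{1..n}. x q \<in> DX q \<and> Dcon v m (x q) (y q) (y (Suc q))"
      and Y: "\<forall>q\<in>{1..n+1}. y q \<in> DY q"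
      unfolding chain_prefix_def by auto
    have "y 1 = 0" using Y start by auto
    moreover have "\<forall>q\<in>{1..n+1}. y q \<in> {0..m}" using Y range by blast
    ultimately have "precedence v m x n"
      using X precedence_iff_Dcon_chain[OF distinct] by blast
    then show "\<exists>x. (\<forall>k\<in>{1..n}. x k \<in> DX k) \<and> x i = a \<and> precedence v m x n"
      using \<open>x i = a\<close> X by blast
  qed
qed

end
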